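(* Let $p$ be a pattern graph, $d$ a data graph and $V_c(p)$ a vertex cover of $p$, and assume $M(p,d)\neq\emptyset$. Let $R=S_{plain}/S_{comp}$ be the compression ratio, where $S_{plain}=|V(p)|\cdot|M(p,d)|$ and $S_{comp}=\sum_{s}\mathrm{size}(f|s)$, the sum ranging over all skeletons $s:V_c(p)\to V(d)$ with $M|s\neq\emptyset$. Then $$R\ \ge\ \frac{|V(p)|\cdot |M(p,d)|}{|V(p)|\cdot |M(p,d)| + |V_c(p)|\cdot \big(|M(p[V_c(p)],d)| - |M(p,d)|\big)}.$$
   Context: Graphs are finite, simple and undirected. $p$ (the pattern) and $d$ (the data graph) are graphs, the vertices of $d$ carry a fixed total order, and $\mathbf{ord}$ is a set of ordered pairs of vertices of $p$ (a symmetry-breaking partial order). For a subgraph $p'$ of $p$, a match of $p'$ in $d$ is an injective map $f:V(p')\to V(d)$ such that $(f(x),f(y))\in E(d)$ for every edge $(x,y)\in E(p')$ and $f(x)<f(y)$ for every $(x,y)\in\mathbf{ord}$ with $x,y\in V(p')$; $M(p',d)$ denotes the set of matches of $p'$ in $d$. A vertex cover of $p$ is a set $V_c(p)\subseteq V(p)$ containing at least one endpoint of every edge of $p$, and $p[V_c(p)]$ is the subgraph of $p$ induced on $V_c(p)$. For a skeleton $s:V_c(p)\to V(d)$, $M|s=\{f\in M(p,d): f|_{V_c(p)}=s\}$. Storage model: each vertex occupies one integer. The compressed form $f|s$ of $M|s$ stores $s$ ($|V_c(p)|$ integers) and, for each $v\in V(p)\setminus V_c(p)$, the set $f|s(v)=\{f(v):f\in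 M|s\}$ ($|f|s(v)|$ integers), so $\mathrm{size}(f|s)=|V_c(p)|+\sum_{v\in V(p)\setminus V_c(p)}|f|s(v)|$. *)

theory Defs
  imports Complex_Main "HOL-Library.FuncSet"
begin

definition simple_graph :: "'v set \<Rightarrow> ('v \<times> 'v) set \<Rightarrow> bool" where
  "simple_graph V E \<longleftrightarrow> finite V \<and> E \<subseteq> V \<times> V \<and> sym E \<and> irrefl E"

definition induced_edges :: "('a \<times> 'a) set \<Rightarrow> 'a set \<Rightarrow> ('a \<times> 'a) set" where
  "induced_edges E S = {(x, y). (x, y) \<in> E \<and> x \<in> S \<and> y \<in> S}"

text \<open>Matches M(p',d) of the subgraph p' = (S, E') of p in d = (Vd, Ed), respecting
the symmetry-breaking order ord.  Maps are represented as functions that are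
extensional (undefined) outside S.\<close>
definition matches ::
  "'a set \<Rightarrow> ('a \<times> 'a) set \<Rightarrow> ('a \<times> 'a) set \<Rightarrow> 'b::linorder set \<Rightarrow> ('b \<times> 'b) set \<Rightarrow> ('a \<Rightarrow> 'b) set" where
  "matches S E' ord Vd Ed =
     {f. f \<in> S \<rightarrow>\<^sub>E Vd \<and> inj_on f S
         \<and> (\<forall>(x, y) \<in> E'. (f x, f y) \<in> Ed)
         \<and> (\<forall>(x, y) \<in> ord. x \<in> S \<longrightarrow> y \<in> S \<longrightarrow> f x < f y)}"

definition vertex_cover :: "'a set \<Rightarrow> ('a \<times> 'a) set \<Rightarrow> 'a set \<Rightarrow> bool" where
  "vertex_cover Vp Ep Vc \<longleftrightarrow> Vc \<subseteq> Vp \<and> (\<forall>(x, y) \<in> Ep. x \<in> Vc \<or> y \<in> Vc)"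

definition matches_given ::
  "'a set \<Rightarrow> ('a \<times> 'a) set \<Rightarrow> ('a \<times> 'a) set \<Rightarrow> 'b::linorder set \<Rightarrow> ('b \<times> 'b) set
   \<Rightarrow> 'a set \<Rightarrow> ('a \<Rightarrow> 'b) \<Rightarrow> ('a \<Rightarrow> 'b) set" where
  "matches_given Vp Ep ord Vd Ed Vc s = {f \<in> matches Vp Ep ord Vd Ed. restrict f Vc = s}"

definition comp_size ::
  "'a set \<Rightarrow> ('a \<times> 'a) set \<Rightarrow> ('a \<times> 'a) set \<Rightarrow> 'b::linorder set \<Rightarrow> ('b \<times> 'b) set
   \<Rightarrow> 'a set \<Rightarrow> ('a \<Rightarrow> 'b) \<Rightarrow> nat" where
  "comp_size Vp Ep ord Vd Ed Vc s =
     card Vc + (\<Sum>v \<in> Vp - Vc. card ((\<lambda>f. f v) ` matches_given Vp Ep ord Vd Ed Vc s))"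

definition skeletons ::
  "'a set \<Rightarrow> ('a \<times> 'a) set \<Rightarrow> ('a \<times> 'a) set \<Rightarrow> 'b::linorder set \<Rightarrow> ('b \<times> 'b) set
   \<Rightarrow> 'a set \<Rightarrow> ('a \<Rightarrow> 'b) set" where
  "skeletons Vp Ep ord Vd Ed Vc =
     {s. s \<in> Vc \<rightarrow>\<^sub>E Vd \<and> matches_given Vp Ep ord Vd Ed Vc s \<noteq> {}}"

definition S_plain ::
  "'a set \<Rightarrow> ('a \<times> 'a) set \<Rightarrow> ('a \<times> 'a) set \<Rightarrow> 'b::linorder set \<Rightarrow> ('b \<times> 'b) set \<Rightarrow> nat" where
  "S_plain Vp Ep ord Vd Ed = card Vp * card (matches Vp Ep ord Vd Ed)"

definition S_comp ::
  "'a set \<Rightarrow> ('a \<times> 'a) set \<Rightarrow> ('a \<times> 'a) set \<Rightarrow> 'b::linorder set \<Rightarrow> ('b \<times> 'b) set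
   \<Rightarrow> 'a set \<Rightarrow> nat" where
  "S_comp Vp Ep ord Vd Ed Vc =
     (\<Sum>s \<in> skeletons Vp Ep ord Vd Ed Vc. comp_size Vp Ep ord Vd Ed Vc s)"

definition compression_ratio ::
  "'a set \<Rightarrow> ('a \<times> 'a) set \<Rightarrow> ('a \<times> 'a) set \<Rightarrow> 'b::linorder set \<Rightarrow> ('b \<times> 'b) set
   \<Rightarrow> 'a set \<Rightarrow> real" where
  "compression_ratio Vp Ep ord Vd Ed Vc =
     real (S_plain Vp Ep ord Vd Ed) / real (S_comp Vp Ep ord Vd Ed Vc)"

end

theory Submission
  imports Defs
begin

text \<open>The matches of p are partitioned by their skeletons, and every skeleton is itself a
match of p[Vc], so there are at most |M(p[Vc],d)| of them. Each compressed block stores |Vc|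
integers plus, for every vertex outside the cover, at most |M|s| values. Summing over the
skeletons gives S_comp \<le> |Vc| |M(p[Vc],d)| + (|V(p)| - |Vc|) |M(p,d)|, which is exactly
the denominator of the bound.\<close>

lemma finite_matches:
  assumes "finite S" and "finite Vd"
  shows "finite (matches S E ord Vd Ed)"
  by (rule finite_subset[of _ "S \<rightarrow>\<^sub>E Vd"]) (auto simp: matches_def finite_PiE assms)

lemma restrict_in_matches_induced:
  assumes f: "f \<in> matches Vp Ep ord Vd Ed" and "Vc \<subseteq> Vp"
  shows "restrict f Vc \<in> matches Vc (induced_edges Ep Vc) ord Vd Ed"
proof -
  have "f \<in> Vp \<rightarrow>\<^sub>E Vd" "inj_on f Vp" "\<forall>(x, y) \<in> Ep. (f x, f y) \<in> Ed"
    "\<forall>(x, y) \<in> ord. x \<in> Vp \<longrightarrow> y \<in> Vp \<longrightarrow> f x < f y"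
    using f by (auto simp: matches_def)
  with \<open>Vc \<subseteq> Vp\<close> show ?thesis
    by (auto simp: matches_def induced_edges_def inj_on_def subset_iff)
qed

lemma skeletons_eq_image_restrict:
  assumes "Vc \<subseteq> Vp"
  shows "skeletons Vp Ep ord Vd Ed Vc = (\<lambda>f. restrict f Vc) ` matches Vp Ep ord Vd Ed"
proof
  show "skeletons Vp Ep ord Vd Ed Vc \<subseteq> (\<lambda>f. restrict f Vc) ` matches Vp Ep ord Vd Ed"
    by (auto simp: skeletons_def matches_given_def)
  show "(\<lambda>f. restrict f Vc) ` matches Vp Ep ord Vd Ed \<subseteq> skeletons Vp Ep ord Vd Ed Vc"
    using assms by (fastforce simp: skeletons_def matches_given_def matches_def)
qed

lemma card_skeletons_le:
  assumes "Vc \<subseteq> Vp" and "finite Vc" and "finite Vd"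
  shows "card (skeletons Vp Ep ord Vd Ed Vc) \<le> card (matches Vc (induced_edges Ep Vc) ord Vd Ed)"
proof (rule card_mono)
  show "finite (matches Vc (induced_edges Ep Vc) ord Vd Ed)"
    using assms by (simp add: finite_matches)
  show "skeletons Vp Ep ord Vd Ed Vc \<subseteq> matches Vc (induced_edges Ep Vc) ord Vd Ed"
    using assms(1) by (auto simp: skeletons_eq_image_restrict restrict_in_matches_induced)
qed

lemma sum_card_matches_given:
  assumes "Vc \<subseteq> Vp" and "finite (matches Vp Ep ord Vd Ed)"
  shows "(\<Sum>s \<in> skeletons Vp Ep ord Vd Ed Vc. card (matches_given Vp Ep ord Vd Ed Vc s))
    = card (matches Vp Ep ord Vd Ed)"
proof -
  let ?K = "skeletons Vp Ep ord Vd Ed Vc" and ?M = "matches Vp Ep ord Vd Ed"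
  have "?M = (\<Union>s \<in> ?K. matches_given Vp Ep ord Vd Ed Vc s)"
    using assms(1) by (auto simp: skeletons_eq_image_restrict matches_given_def)
  moreover have "card (\<Union>s \<in> ?K. matches_given Vp Ep ord Vd Ed Vc s)
      = (\<Sum>s \<in> ?K. card (matches_given Vp Ep ord Vd Ed Vc s))"
    using assms by (intro card_UN_disjoint)
      (auto simp: skeletons_eq_image_restrict matches_given_def)
  ultimately show ?thesis by simp
qed

lemma comp_size_le:
  assumes "finite (matches Vp Ep ord Vd Ed)"
  shows "comp_size Vp Ep ord Vd Ed Vc s
    \<le> card Vc + card (Vp - Vc) * card (matches_given Vp Ep ord Vd Ed Vc s)"
proof -
  have "finite (matches_given Vp Ep ord Vd Ed Vc s)"
    using assms by (simp add: matches_given_def)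
  then have "(\<Sum>v \<in> Vp - Vc. card ((\<lambda>f. f v) ` matches_given Vp Ep ord Vd Ed Vc s))
      \<le> (\<Sum>v \<in> Vp - Vc. card (matches_given Vp Ep ord Vd Ed Vc s))"
    by (intro sum_mono card_image_le)
  then show ?thesis by (simp add: comp_size_def)
qed

lemma S_comp_le:
  assumes "Vc \<subseteq> Vp" and "finite Vp" and "finite Vd"
  shows "S_comp Vp Ep ord Vd Ed Vc \<le> card Vc * card (matches Vc (induced_edges Ep Vc) ord Vd Ed)
    + (card Vp - card Vc) * card (matches Vp Ep ord Vd Ed)"
proof -
  let ?K = "skeletons Vp Ep ord Vd Ed Vc"
  have finite_Vc: "finite Vc" and finite_M: "finite (matches Vp Ep ord Vd Ed)"
    using assms finite_subset by (auto simp: finite_matches)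
  have "S_comp Vp Ep ord Vd Ed Vc
      \<le> (\<Sum>s \<in> ?K. card Vc + card (Vp - Vc) * card (matches_given Vp Ep ord Vd Ed Vc s))"
    unfolding S_comp_def using finite_M by (intro sum_mono comp_size_le)
  also have "\<dots> = card ?K * card Vc + card (Vp - Vc) * card (matches Vp Ep ord Vd Ed)"
    using assms(1) finite_M
    by (simp add: sum.distrib sum_distrib_left[symmetric] sum_card_matches_given)
  also have "\<dots> \<le> card Vc * card (matches Vc (induced_edges Ep Vc) ord Vd Ed)
      + (card Vp - card Vc) * card (matches Vp Ep ord Vd Ed)"
    using card_skeletons_le[OF assms(1) finite_Vc assms(3), of Ep ord Ed]
    by (simp add: card_Diff_subset[OF finite_Vc assms(1)])
  finally show ?thesis .
qed

lemma comp_size_pos: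
  assumes "Vp \<noteq> {}" and "finite Vp" and "Vc \<subseteq> Vp"
    and "finite (matches Vp Ep ord Vd Ed)" and "matches_given Vp Ep ord Vd Ed Vc s \<noteq> {}"
  shows "comp_size Vp Ep ord Vd Ed Vc s > 0"
proof (cases "Vc = {}")
  case True
  then obtain v where v: "v \<in> Vp - Vc" using assms(1) by blast
  have "finite (matches_given Vp Ep ord Vd Ed Vc s)"
    using assms(4) by (simp add: matches_given_def)
  then have "card ((\<lambda>f. f v) ` matches_given Vp Ep ord Vd Ed Vc s) > 0"
    using assms(5) by (simp add: card_gt_0_iff)
  moreover have "card ((\<lambda>f. f v) ` matches_given Vp Ep ord Vd Ed Vc s)
      \<le> (\<Sum>v \<in> Vp - Vc. card ((\<lambda>f. f v) ` matches_given Vp Ep ord Vd Ed Vc s))"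
    using v assms(2) by (intro member_le_sum) auto
  ultimately show ?thesis by (simp add: comp_size_def)
next
  case False
  then have "card Vc > 0"
    using assms(2,3) finite_subset by (auto simp: card_gt_0_iff)
  then show ?thesis by (simp add: comp_size_def)
qed

lemma S_comp_pos:
  assumes "Vp \<noteq> {}" and "finite Vp" and "Vc \<subseteq> Vp"
    and "finite (matches Vp Ep ord Vd Ed)" and "matches Vp Ep ord Vd Ed \<noteq> {}"
  shows "0 < S_comp Vp Ep ord Vd Ed Vc"
proof -
  obtain s where s: "s \<in> skeletons Vp Ep ord Vd Ed Vc"
    using assms(3,5) by (auto simp: skeletons_eq_image_restrict)
  then have "0 < comp_size Vp Ep ord Vd Ed Vc s"
    using assms(1-4) by (intro comp_size_pos) (auto simp: skeletons_def)
  also have "\<dots> \<le> S_comp Vp Ep ord Vd Ed Vc"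
    unfolding S_comp_def using s assms(3,4)
    by (intro member_le_sum) (auto simp: skeletons_eq_image_restrict)
  finally show ?thesis .
qed

theorem mainTheorem2:
  fixes Vp :: "'a set" and Ep ord :: "('a \<times> 'a) set"
    and Vd :: "'b::linorder set" and Ed :: "('b \<times> 'b) set" and Vc :: "'a set"
  assumes "simple_graph Vp Ep" and "simple_graph Vd Ed"
    and "ord \<subseteq> Vp \<times> Vp"
    and "vertex_cover Vp Ep Vc"
    and "matches Vp Ep ord Vd Ed \<noteq> {}"
  shows "compression_ratio Vp Ep ord Vd Ed Vc \<ge>
    real (card Vp * card (matches Vp Ep ord Vd Ed)) /
      (real (card Vp * card (matches Vp Ep ord Vd Ed))
       + real (card Vc) * (real (card (matches Vc (induced_edges Ep Vc) ord Vd Ed))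
                           - real (card (matches Vp Ep ord Vd Ed))))"
proof (cases "Vp = {}")
  case True
  then show ?thesis by (simp add: compression_ratio_def S_plain_def)
next
  case False
  let ?M = "matches Vp Ep ord Vd Ed" and ?Mc = "matches Vc (induced_edges Ep Vc) ord Vd Ed"
  let ?S = "S_comp Vp Ep ord Vd Ed Vc"
  have finite_Vp: "finite Vp" and finite_Vd: "finite Vd"
    using assms(1,2) by (auto simp: simple_graph_def)
  have Vc_sub: "Vc \<subseteq> Vp" using assms(4) by (simp add: vertex_cover_def)
  have finite_M: "finite ?M" using finite_Vp finite_Vd by (rule finite_matches)
  have S_pos: "0 < ?S"
    using False finite_Vp Vc_sub finite_M assms(5) by (rule S_comp_pos)
  have "real ?S \<le> real (card Vc * card ?Mc + (card Vp - card Vc) * card ?M)"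
    using S_comp_le[OF Vc_sub finite_Vp finite_Vd] by (simp only: of_nat_le_iff)
  also have "\<dots> = real (card Vp * card ?M) + real (card Vc) * (real (card ?Mc) - real (card ?M))"
    using card_mono[OF finite_Vp Vc_sub]
    by (simp only: of_nat_add of_nat_mult of_nat_diff) (simp add: algebra_simps)
  finally have S_le: "real ?S \<le> \<dots>" .
  have "0 < real (card Vp * card ?M)"
    using False finite_Vp finite_M assms(5) by (simp add: card_gt_0_iff)
  with S_le S_pos show ?thesis
    unfolding compression_ratio_def S_plain_def by (intro divide_left_mono) auto
qed

end
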